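(* Fix $n\ge 2$, distinct indices $i\neq j$ in $\{1,\dots,n\}$, a tolerance $c>0$ and a deviation level $\delta^i>0$; put $\bar\delta=\delta^i+c$ and $U_{\delta^i}=(-\infty,-\bar\delta)\cup(\bar\delta,\infty)$. Let $\Sigma_0$ be the nominal steady-state covariance described in the context, let $\varepsilon^-\in[0,1)$, $\varepsilon^+\ge 0$, and let $$\mathcal M=\{\mathbb P=\mathcal N(0,\Sigma)\text{ on }\mathbb R^n:\ (1-\varepsilon^-)\Sigma_0\preceq\Sigma\preceq(1+\varepsilon^+)\Sigma_0\}.$$ For $\mathbb P=\mathcal N(0,\Sigma)\in\mathcal M$ and $y=(y_1,\dots,y_n)\sim\mathbb P$, let $\sigma_i^2=\Sigma_{ii}$, $\sigma_j^2=\Sigma_{jj}$, $\rho=\Sigma_{ij}/(\sigma_i\sigma_j)$, $\rho'=\sqrt{1-\rho^2}$, $\delta^*=\bar\delta/(\sqrt2\,\sigma_i)$, and $$\mathbb E^j_i(\mathbb P)=\frac{\mathbb E_{\mathbb P}\big[|y_j|\,\mathbf 1_{\{y_i\in U_{\delta^i}\}}\big]}{\mathbb P(y_i\in U_{\delta^i})}.$$ Then for every $\mathbb P\in\mathcal M$, $$\mathbb E^j_i(\mathbb P)=\sqrt{\frac{2}{\pi}}\,\frac{\sigma_j}{1-\operatorname{erf}(\delta^* )}\left[1-\operatorname{erf}\!\left(\frac{\delta^*}{\rho'}\right)+\rho\,\operatorname{erf}\!\left(\frac{\rho\,\delta^*}{\rho'}\right)e^{-(\delta^* )^2}\right],$$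 and the distributionally robust cascading risk $\mathcal R^j_i:=\inf\{\delta\ge 0:\ \sup_{\mathbb P\in\mathcal M}\mathbb E^j_i(\mathbb P)\le \delta+c\}$ equals $0$ if $\sup_{\mathbb P\in\mathcal M}\mathbb E^j_i(\mathbb P)\le c$, and equals $\sup_{\mathbb P\in\mathcal M}\mathbb E^j_i(\mathbb P)-c$ otherwise.
   Context: Setting: $n$ agents with states $x_t\in\mathbb R^n$ evolving by $\mathrm d x_t=-L\,x_{t-\tau}\,\mathrm dt+b\,\mathrm d w_t$, where $w_t$ is an $n$-dimensional standard Brownian motion, $b\neq 0$, $\tau\ge0$, and $L$ is the Laplacian of a connected, undirected, simple graph with positive edge weights $k_{ij}$ ($L_{ij}=-k_{ij}$ for $i\ne j$, $L_{ii}=\sum_j k_{ij}$). Write $L=Q\Lambda Q^\top$ with $Q=[q_1|\dots|q_n]$ orthogonal, $q_1=\mathbf 1_n/\sqrt n$, $\Lambda=\mathrm{diag}(0,\lambda_2,\dots,\lambda_n)$, $0<\lambda_2\le\dots\le\lambda_n$, and assume the stability condition $\tau<\pi/(2\lambda_n)$. The observables are $y_t=M_nx_t$ with $M_n=I_n-\frac1n\mathbf 1_n\mathbf 1_n^\top$; their steady-state distribution is $\mathcal N(0,\Sigma)$ with $\Sigma=b^2M_nQ\Psi Q^\top M_n$, $\Psi=\mathrm{diag}\big(0,\psi(\lambda_2),\dots,\psi(\lambda_n)\big)$, $\psi(\lambda)=\frac{\cos(\lambda\tau)}{2\lambda(1-\sin(\lambda\tau))}$. The nominal covariance $\Sigma_0$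 is this matrix evaluated at nominal parameter values $(b_0,\tau_0,L_0)$ satisfying the same assumptions. $\operatorname{erf}(x)=\frac{2}{\sqrt\pi}\int_0^xe^{-t^2}dt$. *)

theory Defs
  imports "HOL-Probability.Probability"
begin

text \<open>Weighted simple undirected graph on the finite vertex type 'n, given by a
  weight function w: w a b > 0 iff {a,b} is an edge (weight w a b), w a b = 0 otherwise.\<close>
definition weighted_simple_graph :: "('n::finite \<Rightarrow> 'n \<Rightarrow> real) \<Rightarrow> bool" where
  "weighted_simple_graph w \<longleftrightarrow> (\<forall>a b. w a b = w b a) \<and> (\<forall>a. w a a = 0) \<and> (\<forall>a b. 0 \<le> w a b)"

definition graph_connected :: "('n::finite \<Rightarrow> 'n \<Rightarrow> real) \<Rightarrow> bool" where
  "graph_connected w \<longleftrightarrow> (\<forall>a b. (a, b) \<in> {(x, y). 0 < w x y}\<^sup>*)"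

definition laplacian :: "('n::finite \<Rightarrow> 'n \<Rightarrow> real) \<Rightarrow> real^'n^'n" where
  "laplacian w = (\<chi> a b. if a = b then (\<Sum>c\<in>UNIV. w a c) else - w a b)"

definition diag_mat :: "('n::finite \<Rightarrow> real) \<Rightarrow> real^'n^'n" where
  "diag_mat d = (\<chi> a b. if a = b then d a else 0)"

definition centering :: "real^'n^'n" where
  "centering = mat 1 - (1 / real CARD('n)) *\<^sub>R (\<chi> a b. 1)"

definition psi :: "real \<Rightarrow> real \<Rightarrow> real" where
  "psi tau lam = cos (lam * tau) / (2 * lam * (1 - sin (lam * tau)))"

definition loewner_le :: "real^'n^'n \<Rightarrow> real^'n^'n \<Rightarrow> bool" where
  "loewner_le A B \<longleftrightarrow> (\<forall>u::real^'n. u \<bullet> (A *v u) \<le> u \<bullet> (B *v u))"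

text \<open>P is the (possibly degenerate) centred Gaussian N(0,S) on R^n:
  a probability measure on the Borel sets with characteristic function exp(-u^T S u / 2),
  S a symmetric positive semidefinite matrix.\<close>
definition gaussian_vec :: "(real^'n::finite) measure \<Rightarrow> real^'n^'n \<Rightarrow> bool" where
  "gaussian_vec P S \<longleftrightarrow> prob_space P \<and> sets P = sets borel \<and> transpose S = S \<and>
     (\<forall>u. 0 \<le> u \<bullet> (S *v u)) \<and>
     (\<forall>u. integral\<^sup>L P (\<lambda>x. cis (u \<bullet> x)) = complex_of_real (exp (- (u \<bullet> (S *v u)) / 2)))"

definition erf :: "real \<Rightarrow> real" where
  "erf x = 2 / sqrt pi * (LBINT t=0..ereal x. exp (- (t^2)))"

text \<open>erf(a/b), with the value at b = 0 taken as the limit b -> 0+, i.e. sgn a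
  (used for the degenerate case rho' = 0).\<close>
definition erf_div :: "real \<Rightarrow> real \<Rightarrow> real" where
  "erf_div a b = (if b = 0 then sgn a else erf (a / b))"

definition U_set :: "real \<Rightarrow> real set" where
  "U_set dbar = {x. x < - dbar} \<union> {x. dbar < x}"

definition cond_abs_mean :: "(real^'n::finite) measure \<Rightarrow> 'n \<Rightarrow> 'n \<Rightarrow> real \<Rightarrow> real" where
  "cond_abs_mean P i j dbar =
     integral\<^sup>L P (\<lambda>y. \<bar>y $ j\<bar> * indicator {y. y $ i \<in> U_set dbar} y)
     / measure P {y. y $ i \<in> U_set dbar}"

definition closed_form :: "real^'n^'n \<Rightarrow> 'n \<Rightarrow> 'n \<Rightarrow> real \<Rightarrow> real" where
  "closed_form S i j dbar =
     (let si = sqrt (S $ i $ i); sj = sqrt (S $ j $ j);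
          rho = S $ i $ j / (si * sj); rho' = sqrt (1 - rho^2);
          ds = dbar / (sqrt 2 * si)
      in sqrt (2 / pi) * (sj / (1 - erf ds)) *
         (1 - erf_div ds rho' + rho * erf_div (rho * ds) rho' * exp (- (ds^2))))"

end

theory Submission
  imports Defs
begin

text \<open>Write \<open>y\<^sub>j = \<beta> y\<^sub>i + e\<close> with \<open>\<beta> = \<Sigma>\<^sub>i\<^sub>j / \<Sigma>\<^sub>i\<^sub>i\<close>. The characteristic function of
  \<open>N(0, \<Sigma>)\<close> shows that the residual \<open>e\<close> is centred Gaussian with variance
  \<open>\<Sigma>\<^sub>j\<^sub>j - \<Sigma>\<^sub>i\<^sub>j\<^sup>2 / \<Sigma>\<^sub>i\<^sub>i\<close> and independent of \<open>y\<^sub>i\<close>. Writing \<open>y\<^sub>i = \<sigma>\<^sub>i x\<close>, the conditional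
  mean of \<open>|y\<^sub>j|\<close> given \<open>x\<close> is the folded normal mean \<open>E |\<beta> \<sigma>\<^sub>i x + sd(e) X|\<close>, an explicit
  erf expression in \<open>x\<close>. Its integral against the normal density over the tail
  \<open>|x| > dbar / \<sigma>\<^sub>i\<close> has an elementary antiderivative, and dividing by
  \<open>P(|y\<^sub>i| > dbar) = 1 - erf (dbar / (sqrt 2 \<sigma>\<^sub>i))\<close> gives the closed form. The Loewner bounds only serve to make
  the diagonal of \<open>\<Sigma>\<close> positive; the risk is \<open>inf {\<delta> \<ge> 0. s \<le> \<delta> + c} = max 0 (s - c)\<close>.\<close>

abbreviation \<phi> :: "real \<Rightarrow> real" where
  "\<phi> \<equiv> std_normal_density"

lemma erf_0 [simp]: "erf 0 = 0"
  by (simp add: erf_def zero_ereal_def)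

lemma erf_has_real_derivative: "(erf has_real_derivative 2 / sqrt pi * exp (- x\<^sup>2)) (at x)"
proof -
  define R where "R = \<bar>x\<bar> + 1"
  have "continuous_on {-R..R} (\<lambda>t::real. exp (- t\<^sup>2))"
    by (intro continuous_intros)
  then have "((\<lambda>u. LBINT t=ereal 0..ereal u. exp (- t\<^sup>2)) has_vector_derivative exp (- x\<^sup>2))
      (at x within {-R..R})"
    by (rule interval_integral_FTC2[rotated 2]) (auto simp: R_def)
  moreover have "at x within {-R..R} = at x"
    by (rule at_within_Icc_at) (auto simp: R_def)
  ultimately have "((\<lambda>u. LBINT t=0..ereal u. exp (- t\<^sup>2)) has_real_derivative exp (- x\<^sup>2)) (at x)"
    by (simp add: has_real_derivative_iff_has_vector_derivative zero_ereal_def)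
  then show ?thesis
    unfolding erf_def[abs_def] by (rule DERIV_cmult)
qed

lemma erf_has_real_derivative_comp [derivative_intros]:
  "(f has_real_derivative f') (at x within s) \<Longrightarrow>
    ((\<lambda>x. erf (f x)) has_real_derivative 2 / sqrt pi * exp (- (f x)\<^sup>2) * f') (at x within s)"
  by (rule DERIV_chain2[OF erf_has_real_derivative])

lemma isCont_erf: "isCont erf x"
  using erf_has_real_derivative by (rule DERIV_isCont)

lemma borel_measurable_erf [measurable]: "erf \<in> borel_measurable borel"
  by (intro borel_measurable_continuous_onI continuous_at_imp_continuous_on ballI isCont_erf)

lemma erf_minus: "erf (- x) = - erf x"
proof -
  have "(LBINT t=0..ereal (- x). exp (- t\<^sup>2)) = (LBINT t=- ereal (- x)..- 0. exp (- (- t)\<^sup>2))"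
    by (rule interval_integral_reflect)
  also have "\<dots> = - (LBINT t=0..ereal x. exp (- t\<^sup>2))"
    by (simp add: zero_ereal_def interval_integral_endpoints_reverse[symmetric])
  finally show ?thesis
    unfolding erf_def by simp
qed

lemma erf_mono: "x \<le> y \<Longrightarrow> erf x \<le> erf y"
  by (rule DERIV_nonneg_imp_nondecreasing) (auto intro!: exI erf_has_real_derivative)

lemma erf_tendsto_at_top: "(erf \<longlongrightarrow> 1) at_top"
proof -
  have int: "set_integrable lborel {0..} (\<lambda>x::real. exp (- x\<^sup>2))"
    and val: "set_lebesgue_integral lborel {0..} (\<lambda>x::real. exp (- x\<^sup>2)) = sqrt pi / 2"
    using gaussian_moment_0
    unfolding set_integrable_def set_lebesgue_integral_def has_bochner_integral_iff by simp_all
  have "((\<lambda>b. set_lebesgue_integral lborel {0..b} (\<lambda>x::real. exp (- x\<^sup>2)))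
      \<longlongrightarrow> sqrt pi / 2) at_top"
    using tendsto_set_lebesgue_integral_at_top[OF _ int] val by simp
  then have "((\<lambda>b. 2 / sqrt pi * set_lebesgue_integral lborel {0..b} (\<lambda>x::real. exp (- x\<^sup>2)))
      \<longlongrightarrow> 2 / sqrt pi * (sqrt pi / 2)) at_top"
    by (rule tendsto_mult_left)
  moreover have "\<forall>\<^sub>F b in at_top.
      2 / sqrt pi * set_lebesgue_integral lborel {0..b} (\<lambda>x::real. exp (- x\<^sup>2)) = erf b"
    using eventually_ge_at_top[of "0::real"]
    by eventually_elim (simp add: erf_def zero_ereal_def interval_integral_Icc)
  ultimately show ?thesis
    by (simp add: Lim_transform_eventually)
qed

lemma erf_le_1: "erf x \<le> 1"
  by (rule tendsto_lowerbound[OF erf_tendsto_at_top])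
    (auto intro!: eventually_at_top_linorderI[of x] erf_mono)

lemma abs_erf_le_1: "\<bar>erf x\<bar> \<le> 1"
  using erf_le_1[of x] erf_le_1[of "- x"] by (simp add: erf_minus)

lemma mult_erf_nonneg: "0 \<le> x * erf x"
  using erf_mono[of 0 x] erf_mono[of x 0] by (cases "0 \<le> x") (auto intro: mult_nonpos_nonpos)

lemma erf_div_scale: "0 < c \<Longrightarrow> erf_div (c * a) (c * b) = erf_div a b"
  by (simp add: erf_div_def sgn_mult)

lemma mult_erf_div_nonneg: "0 \<le> b \<Longrightarrow> 0 \<le> a * erf_div a b"
  using mult_erf_nonneg[of "a / b"]
  by (auto simp: erf_div_def zero_le_mult_iff zero_le_divide_iff abs_mult_self_eq
      intro: mult_nonneg_nonneg)

lemma std_normal_density_eq: "\<phi> x = exp (- x\<^sup>2 / 2) / sqrt (2 * pi)"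
  by (simp add: std_normal_density_def)

lemma std_normal_density_pos: "0 < \<phi> x"
  by (simp add: normal_density_pos)

lemma std_normal_density_minus: "\<phi> (- x) = \<phi> x"
  by (simp add: std_normal_density_eq)

lemma std_normal_density_has_real_derivative: "(\<phi> has_real_derivative - x * \<phi> x) (at x)"
proof -
  have "((\<lambda>x. exp (- x\<^sup>2 / 2) / sqrt (2 * pi)) has_real_derivative
      exp (- x\<^sup>2 / 2) * (- (2 * x) / 2) / sqrt (2 * pi)) (at x)"
    by (auto intro!: derivative_eq_intros simp: field_simps)
  then show ?thesis
    by (simp add: std_normal_density_eq[abs_def] field_simps)
qed

lemma std_normal_cdf_has_real_derivative:
  "((\<lambda>x. (1 + erf (x / sqrt 2)) / 2) has_real_derivative \<phi> x) (at x)"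
proof -
  have "((\<lambda>x. (1 + erf (x / sqrt 2)) / 2) has_real_derivative
      exp (- (x / sqrt 2)\<^sup>2) / (sqrt pi * sqrt 2)) (at x)"
    by (auto intro!: derivative_eq_intros simp: field_simps)
  then show ?thesis
    by (simp add: std_normal_density_eq power_divide real_sqrt_mult mult.commute)
qed

lemma std_normal_density_tendsto_at_top: "(\<phi> \<longlongrightarrow> 0) at_top"
  unfolding std_normal_density_def by real_asymp

lemma nn_integral_std_normal_density: "(\<integral>\<^sup>+x. ennreal (\<phi> x) \<partial>lborel) = 1"
  using prob_space.emeasure_space_1[OF prob_space_normal_density[of 1 0]]
  by (simp add: emeasure_density)

lemma nn_integral_lborel_reflect:
  fixes f :: "real \<Rightarrow> ennreal"
  assumes "f \<in> borel_measurable borel"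
  shows "(\<integral>\<^sup>+x. f x \<partial>lborel) = (\<integral>\<^sup>+x. f (- x) \<partial>lborel)"
  using nn_integral_real_affine[OF assms, of "- 1" 0] by simp

lemma nn_integral_FTC_atLeast_nonneg:
  fixes f F :: "real \<Rightarrow> real"
  assumes f: "f \<in> borel_measurable borel"
    and F: "\<And>x. a \<le> x \<Longrightarrow> (F has_real_derivative f x) (at x)"
    and nonneg: "\<And>x. a \<le> x \<Longrightarrow> 0 \<le> f x"
    and lim: "(F \<longlongrightarrow> T) at_top"
  shows "(\<integral>\<^sup>+x. ennreal (f x) * indicator {a..} x \<partial>lborel) = ennreal (T - F a)"
    and "F a \<le> T"
proof -
  show "(\<integral>\<^sup>+x. ennreal (f x) * indicator {a..} x \<partial>lborel) = ennreal (T - F a)"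
    using nn_integral_FTC_atLeast[OF f F nonneg lim] by simp
  have "F a \<le> F x" if "a \<le> x" for x
    using that F nonneg by (intro DERIV_nonneg_imp_nondecreasing[OF that]) auto
  then show "F a \<le> T"
    by (intro tendsto_lowerbound[OF lim]) (auto intro!: eventually_at_top_linorderI[of a])
qed

lemma nn_integral_std_normal_tail:
  "(\<integral>\<^sup>+x. ennreal (\<phi> x) * indicator {z..} x \<partial>lborel) = ennreal ((1 - erf (z / sqrt 2)) / 2)"
proof -
  have "filterlim (\<lambda>x::real. x / sqrt 2) at_top at_top"
    by real_asymp
  then have "((\<lambda>x. (1 + erf (x / sqrt 2)) / 2) \<longlongrightarrow> (1 + 1) / 2) at_top"
    by (intro tendsto_intros filterlim_compose[OF erf_tendsto_at_top]) simp_all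
  then have "(\<integral>\<^sup>+x. ennreal (\<phi> x) * indicator {z..} x \<partial>lborel)
      = ennreal ((1 + 1) / 2 - (1 + erf (z / sqrt 2)) / 2)"
    by (intro nn_integral_FTC_atLeast_nonneg(1) std_normal_cdf_has_real_derivative) auto
  also have "(1 + 1) / 2 - (1 + erf (z / sqrt 2)) / 2 = (1 - erf (z / sqrt 2)) / 2"
    by (simp add: field_simps)
  finally show ?thesis .
qed

lemma nn_integral_std_normal_pos_part:
  fixes m g :: real
  assumes g: "0 < g"
  shows "(\<integral>\<^sup>+t. ennreal (\<phi> t * max 0 (m + g * t)) \<partial>lborel)
      = ennreal ((m + m * erf (m / (g * sqrt 2))) / 2 + g * \<phi> (m / g))"
    and "0 \<le> (m + m * erf (m / (g * sqrt 2))) / 2 + g * \<phi> (m / g)"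
proof -
  define F where "F t = m * ((1 + erf (t / sqrt 2)) / 2) - g * \<phi> t" for t
  have F': "(F has_real_derivative (m + g * t) * \<phi> t) (at t)" for t
  proof -
    have "(F has_real_derivative m * \<phi> t - g * (- t * \<phi> t)) (at t)"
      unfolding F_def[abs_def]
      by (intro DERIV_diff DERIV_cmult std_normal_cdf_has_real_derivative
          std_normal_density_has_real_derivative)
    then show ?thesis
      by (simp add: algebra_simps)
  qed
  have "filterlim (\<lambda>x::real. x / sqrt 2) at_top at_top"
    by real_asymp
  then have "(F \<longlongrightarrow> m * ((1 + 1) / 2) - g * 0) at_top"
    unfolding F_def[abs_def]
    by (intro tendsto_intros filterlim_compose[OF erf_tendsto_at_top]
        std_normal_density_tendsto_at_top) simp_all
  then have lim: "(F \<longlongrightarrow> m) at_top"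
    by simp
  have meas: "(\<lambda>t. (m + g * t) * \<phi> t) \<in> borel_measurable borel"
    by simp
  have nonneg: "- m / g \<le> t \<Longrightarrow> 0 \<le> (m + g * t) * \<phi> t" for t
    using g std_normal_density_pos[of t] by (intro mult_nonneg_nonneg) (auto simp: field_simps)
  have F_root: "m - F (- m / g) = (m + m * erf (m / (g * sqrt 2))) / 2 + g * \<phi> (m / g)"
    using erf_minus[of "m / (g * sqrt 2)"] std_normal_density_minus[of "m / g"]
    by (simp add: F_def field_simps)
  have "ennreal (\<phi> t * max 0 (m + g * t)) = ennreal ((m + g * t) * \<phi> t) * indicator {- m / g..} t"
    for t
    using g by (auto simp: indicator_def max_def field_simps mult.commute)
  then show "(\<integral>\<^sup>+t. ennreal (\<phi> t * max 0 (m + g * t)) \<partial>lborel)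
      = ennreal ((m + m * erf (m / (g * sqrt 2))) / 2 + g * \<phi> (m / g))"
    using nn_integral_FTC_atLeast_nonneg(1)[where a = "- m / g", OF meas F' nonneg lim] F_root by simp
  show "0 \<le> (m + m * erf (m / (g * sqrt 2))) / 2 + g * \<phi> (m / g)"
    using nn_integral_FTC_atLeast_nonneg(2)[where a = "- m / g", OF meas F' nonneg lim] F_root by simp
qed

text \<open>\<open>E |m + g X|\<close> for standard normal \<open>X\<close> (the mean of a folded normal distribution);
  through \<open>erf_div\<close> the formula also covers \<open>g = 0\<close>, where it equals \<open>|m|\<close>.\<close>
definition folded_normal_mean :: "real \<Rightarrow> real \<Rightarrow> real" where
  "folded_normal_mean m g = m * erf_div m (g * sqrt 2) + 2 * g * \<phi> (m / g)"

lemma borel_measurable_folded_normal_mean [measurable]: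
  "(\<lambda>m. folded_normal_mean m g) \<in> borel_measurable borel"
  unfolding folded_normal_mean_def erf_div_def by measurable

lemma folded_normal_mean_nonneg: "0 \<le> g \<Longrightarrow> 0 \<le> folded_normal_mean m g"
  unfolding folded_normal_mean_def
  using mult_erf_div_nonneg[of "g * sqrt 2" m] std_normal_density_pos[of "m / g"] by simp

lemma folded_normal_mean_minus: "folded_normal_mean (- m) g = folded_normal_mean m g"
  by (simp add: folded_normal_mean_def erf_div_def erf_minus std_normal_density_minus sgn_minus)

lemma nn_integral_std_normal_abs_affine:
  fixes m g :: real
  assumes g: "0 \<le> g"
  shows "(\<integral>\<^sup>+t. ennreal (\<phi> t * \<bar>m + g * t\<bar>) \<partial>lborel) = ennreal (folded_normal_mean m g)"
proof (cases "g = 0")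
  case True
  then show ?thesis
    by (simp add: folded_normal_mean_def erf_div_def abs_if sgn_if ennreal_mult' nn_integral_cmult
        nn_integral_std_normal_density mult.commute)
next
  case False
  with g have g: "0 < g"
    by simp
  have split: "ennreal (\<phi> t * \<bar>m + g * t\<bar>)
      = ennreal (\<phi> t * max 0 (m + g * t)) + ennreal (\<phi> (- t) * max 0 (- m + g * - t))" for t
  proof -
    have "\<phi> t * \<bar>m + g * t\<bar> = \<phi> t * max 0 (m + g * t) + \<phi> (- t) * max 0 (- m + g * - t)"
      by (simp add: std_normal_density_minus max_def abs_if algebra_simps)
    then show ?thesis
      using std_normal_density_pos[of t] by (simp add: ennreal_plus)
  qed
  have "(\<integral>\<^sup>+t. ennreal (\<phi> t * \<bar>m + g * t\<bar>) \<partial>lborel)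
      = (\<integral>\<^sup>+t. ennreal (\<phi> t * max 0 (m + g * t)) \<partial>lborel)
        + (\<integral>\<^sup>+t. ennreal (\<phi> (- t) * max 0 (- m + g * - t)) \<partial>lborel)"
    unfolding split by (rule nn_integral_add) auto
  also have "\<dots> = (\<integral>\<^sup>+t. ennreal (\<phi> t * max 0 (m + g * t)) \<partial>lborel)
        + (\<integral>\<^sup>+t. ennreal (\<phi> t * max 0 (- m + g * t)) \<partial>lborel)"
    by (subst (2) nn_integral_lborel_reflect) simp_all
  also have "\<dots> = ennreal (folded_normal_mean m g)"
  proof -
    have "(m + m * erf (m / (g * sqrt 2))) / 2 + g * \<phi> (m / g)
        + ((- m + - m * erf (- m / (g * sqrt 2))) / 2 + g * \<phi> (- m / g))
        = folded_normal_mean m g"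
      using g by (simp add: folded_normal_mean_def erf_div_def erf_minus std_normal_density_minus
          add_divide_distrib diff_divide_distrib)
    then show ?thesis
      using nn_integral_std_normal_pos_part[OF g, of m] nn_integral_std_normal_pos_part[OF g, of "- m"]
      by (simp add: ennreal_plus[symmetric])
  qed
  finally show ?thesis .
qed

lemma folded_normal_mean_tail_has_real_derivative:
  fixes b g :: real
  assumes g: "0 < g"
  defines "s \<equiv> sqrt (b\<^sup>2 + g\<^sup>2)"
  shows "((\<lambda>x. s / sqrt (2 * pi) * erf (s * x / (g * sqrt 2)) - b * (\<phi> x * erf (b * x / (g * sqrt 2))))
    has_real_derivative \<phi> x * folded_normal_mean (b * x) g) (at x)"
proof -
  define E where "E = exp (- x\<^sup>2 / 2 - b\<^sup>2 * x\<^sup>2 / (2 * g\<^sup>2))"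
  have s2: "s\<^sup>2 = b\<^sup>2 + g\<^sup>2"
    unfolding s_def by simp
  have exp_b: "\<phi> x * exp (- (b * x / (g * sqrt 2))\<^sup>2) = E / sqrt (2 * pi)"
    unfolding std_normal_density_eq E_def using g
    by (simp add: exp_add[symmetric] power_divide power_mult_distrib field_simps)
  have exp_s: "exp (- (s * x / (g * sqrt 2))\<^sup>2) = E"
    unfolding E_def using g by (simp add: power_divide power_mult_distrib s2 field_simps)
  have phi_phi: "\<phi> x * \<phi> (b * x / g) = E / (2 * pi)"
    unfolding std_normal_density_eq E_def using g
    by (simp add: exp_add[symmetric] power_divide power_mult_distrib field_simps)
  have sqrt_prod: "sqrt pi * sqrt 2 * sqrt (2 * pi) = 2 * pi"
    by (simp add: real_sqrt_mult mult_ac)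
  have d_s: "((\<lambda>x. erf (s * x / (g * sqrt 2))) has_real_derivative
      2 / sqrt pi * exp (- (s * x / (g * sqrt 2))\<^sup>2) * (s / (g * sqrt 2))) (at x)"
    using g by (intro erf_has_real_derivative_comp) (auto intro!: derivative_eq_intros)
  have d_b: "((\<lambda>x. erf (b * x / (g * sqrt 2))) has_real_derivative
      2 / sqrt pi * exp (- (b * x / (g * sqrt 2))\<^sup>2) * (b / (g * sqrt 2))) (at x)"
    using g by (intro erf_has_real_derivative_comp) (auto intro!: derivative_eq_intros)
  have "((\<lambda>x. s / sqrt (2 * pi) * erf (s * x / (g * sqrt 2)) - b * (\<phi> x * erf (b * x / (g * sqrt 2))))
    has_real_derivative
      s / sqrt (2 * pi) * (2 / sqrt pi * exp (- (s * x / (g * sqrt 2))\<^sup>2) * (s / (g * sqrt 2)))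
      - b * (- x * \<phi> x * erf (b * x / (g * sqrt 2))
             + 2 / sqrt pi * exp (- (b * x / (g * sqrt 2))\<^sup>2) * (b / (g * sqrt 2)) * \<phi> x)) (at x)"
    by (intro DERIV_diff DERIV_cmult DERIV_mult std_normal_density_has_real_derivative d_s d_b)
  also have "s / sqrt (2 * pi) * (2 / sqrt pi * exp (- (s * x / (g * sqrt 2))\<^sup>2) * (s / (g * sqrt 2)))
      - b * (- x * \<phi> x * erf (b * x / (g * sqrt 2))
             + 2 / sqrt pi * exp (- (b * x / (g * sqrt 2))\<^sup>2) * (b / (g * sqrt 2)) * \<phi> x)
    = b * x * \<phi> x * erf (b * x / (g * sqrt 2))
      + 2 * (s\<^sup>2 - b\<^sup>2) * E / (g * (sqrt pi * sqrt 2 * sqrt (2 * pi)))"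
    using g exp_b exp_s by (simp add: field_simps power2_eq_square)
  also have "\<dots> = \<phi> x * folded_normal_mean (b * x) g"
    unfolding folded_normal_mean_def erf_div_def sqrt_prod s2 using g phi_phi
    by (simp add: field_simps power2_eq_square)
  finally show ?thesis .
qed

lemma nn_integral_std_normal_abs_linear_tail:
  fixes b z :: real
  assumes z: "0 \<le> z"
  shows "(\<integral>\<^sup>+x. ennreal (\<phi> x * \<bar>b * x\<bar>) * indicator {z..} x \<partial>lborel) = ennreal (\<bar>b\<bar> * \<phi> z)"
proof -
  have "(\<integral>\<^sup>+x. ennreal (\<phi> x * \<bar>b * x\<bar>) * indicator {z..} x \<partial>lborel)
      = (\<integral>\<^sup>+x. ennreal (\<bar>b\<bar> * x * \<phi> x) * indicator {z..} x \<partial>lborel)"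
    using z by (intro nn_integral_cong) (auto simp: indicator_def abs_mult)
  also have "\<dots> = ennreal (\<bar>b\<bar> * 0 - - \<bar>b\<bar> * \<phi> z)"
  proof (rule nn_integral_FTC_atLeast_nonneg)
    show "((\<lambda>x. - \<bar>b\<bar> * \<phi> x) has_real_derivative \<bar>b\<bar> * x * \<phi> x) (at x)" for x
      using DERIV_cmult[OF std_normal_density_has_real_derivative[of x], of "- \<bar>b\<bar>"]
      by (simp add: mult.assoc)
    show "((\<lambda>x. - \<bar>b\<bar> * \<phi> x) \<longlongrightarrow> \<bar>b\<bar> * 0) at_top"
      using tendsto_mult[OF tendsto_const[of "- \<bar>b\<bar>"] std_normal_density_tendsto_at_top] by simp
  qed (use z std_normal_density_pos in auto)
  finally show ?thesis
    by simp
qed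

lemma nn_integral_std_normal_folded_mean_tail_pos:
  fixes b g z :: real
  assumes g: "0 < g"
  defines "s \<equiv> sqrt (b\<^sup>2 + g\<^sup>2)"
  defines "T \<equiv> s / sqrt (2 * pi) * (1 - erf (s * z / (g * sqrt 2)))
              + b * \<phi> z * erf (b * z / (g * sqrt 2))"
  shows "(\<integral>\<^sup>+x. ennreal (\<phi> x * folded_normal_mean (b * x) g) * indicator {z..} x \<partial>lborel) = ennreal T"
    and "0 \<le> T"
proof -
  define H where "H x = s / sqrt (2 * pi) * erf (s * x / (g * sqrt 2))
    - b * (\<phi> x * erf (b * x / (g * sqrt 2)))" for x
  have H': "(H has_real_derivative \<phi> x * folded_normal_mean (b * x) g) (at x)" for x
    unfolding H_def[abs_def] s_def by (rule folded_normal_mean_tail_has_real_derivative[OF g])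
  have "0 < s"
    using g by (simp add: s_def add_nonneg_pos)
  then have "filterlim (\<lambda>x. s / (g * sqrt 2) * x) at_top at_top"
    using g by (intro filterlim_tendsto_pos_mult_at_top[OF tendsto_const]) (auto simp: filterlim_ident)
  then have "((\<lambda>x. s / sqrt (2 * pi) * erf (s * x / (g * sqrt 2))) \<longlongrightarrow> s / sqrt (2 * pi) * 1) at_top"
    by (intro tendsto_intros filterlim_compose[OF erf_tendsto_at_top]) simp
  moreover have "((\<lambda>x. b * (\<phi> x * erf (b * x / (g * sqrt 2)))) \<longlongrightarrow> b * 0) at_top"
    by (intro tendsto_mult_left Lim_null_comparison[OF _ std_normal_density_tendsto_at_top])
      (simp add: abs_mult mult_left_le[OF abs_erf_le_1] less_imp_le[OF std_normal_density_pos])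
  ultimately have "(H \<longlongrightarrow> s / sqrt (2 * pi) * 1 - b * 0) at_top"
    unfolding H_def[abs_def] by (rule tendsto_diff)
  then have lim: "(H \<longlongrightarrow> s / sqrt (2 * pi)) at_top"
    by simp
  have "0 \<le> \<phi> x * folded_normal_mean (b * x) g" for x
    using folded_normal_mean_nonneg[of g "b * x"] g std_normal_density_pos[of x] by simp
  note FTC = nn_integral_FTC_atLeast_nonneg[where a = z, OF _ H' this lim]
  have "T = s / sqrt (2 * pi) - H z"
    by (simp add: T_def H_def algebra_simps)
  then show "(\<integral>\<^sup>+x. ennreal (\<phi> x * folded_normal_mean (b * x) g) * indicator {z..} x \<partial>lborel) = ennreal T"
    and "0 \<le> T"
    using FTC by simp_all
qed

lemma nn_integral_std_normal_folded_mean_tail: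
  fixes b g z :: real
  assumes g: "0 \<le> g" and z: "0 \<le> z"
  defines "s \<equiv> sqrt (b\<^sup>2 + g\<^sup>2)"
  defines "T \<equiv> s / sqrt (2 * pi) * (1 - erf_div (s * z) (g * sqrt 2))
              + b * \<phi> z * erf_div (b * z) (g * sqrt 2)"
  shows "(\<integral>\<^sup>+x. ennreal (\<phi> x * folded_normal_mean (b * x) g) * indicator {z..} x \<partial>lborel) = ennreal T"
    and "0 \<le> T"
proof -
  have "(\<integral>\<^sup>+x. ennreal (\<phi> x * folded_normal_mean (b * x) g) * indicator {z..} x \<partial>lborel) = ennreal T
    \<and> 0 \<le> T"
  proof (cases "g = 0")
    case True
    have "T = \<bar>b\<bar> * \<phi> z"
    proof (cases "z = 0")
      case True
      then show ?thesis
        using \<open>g = 0\<close> by (simp add: T_def s_def erf_div_def std_normal_density_eq)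
    next
      case False
      with z have "0 < z"
        by simp
      then have "sgn (b * z) = sgn b" and "sgn (sqrt (b\<^sup>2) * z) = sgn \<bar>b\<bar>"
        by (simp_all add: sgn_mult)
      then show ?thesis
        using \<open>g = 0\<close> by (cases "b = 0") (simp_all add: T_def s_def erf_div_def abs_if)
    qed
    moreover have "folded_normal_mean (b * x) g = \<bar>b * x\<bar>" for x
      using \<open>g = 0\<close> by (simp add: folded_normal_mean_def erf_div_def abs_if sgn_if)
    ultimately show ?thesis
      using nn_integral_std_normal_abs_linear_tail[OF z, of b] std_normal_density_pos[of z] by simp
  next
    case False
    with g have "0 < g"
      by simp
    then show ?thesis
      using nn_integral_std_normal_folded_mean_tail_pos[OF \<open>0 < g\<close>, of b z]
      by (simp add: T_def s_def erf_div_def)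
  qed
  then show "(\<integral>\<^sup>+x. ennreal (\<phi> x * folded_normal_mean (b * x) g) * indicator {z..} x \<partial>lborel) = ennreal T"
    and "0 \<le> T"
    by simp_all
qed

lemma nn_integral_U_set_even:
  fixes f :: "real \<Rightarrow> real" and s a :: real
  assumes s: "0 < s" and a: "0 < a" and f [measurable]: "f \<in> borel_measurable borel"
    and even: "\<And>x. f (- x) = f x"
  shows "(\<integral>\<^sup>+x. ennreal (f x) * indicator (U_set a) (s * x) \<partial>lborel)
       = 2 * (\<integral>\<^sup>+x. ennreal (f x) * indicator {a / s..} x \<partial>lborel)"
proof -
  have "indicator (U_set a) (s * x) = (indicator {a / s<..} x + indicator {a / s<..} (- x) :: ennreal)"
    for x
    using s a by (auto simp: U_set_def indicator_def field_simps)
  then have "(\<integral>\<^sup>+x. ennreal (f x) * indicator (U_set a) (s * x) \<partial>lborel)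
      = (\<integral>\<^sup>+x. ennreal (f x) * indicator {a / s<..} x \<partial>lborel)
        + (\<integral>\<^sup>+x. ennreal (f (- x)) * indicator {a / s<..} (- x) \<partial>lborel)"
    by (simp add: distrib_left even nn_integral_add)
  also have "\<dots> = 2 * (\<integral>\<^sup>+x. ennreal (f x) * indicator {a / s<..} x \<partial>lborel)"
    using nn_integral_lborel_reflect[of "\<lambda>x. ennreal (f x) * indicator {a / s<..} x"]
    by (simp add: mult_2)
  also have "(\<integral>\<^sup>+x. ennreal (f x) * indicator {a / s<..} x \<partial>lborel)
      = (\<integral>\<^sup>+x. ennreal (f x) * indicator {a / s..} x \<partial>lborel)"
    using AE_lborel_singleton[of "a / s"]
    by (intro nn_integral_cong_AE) (auto elim!: eventually_mono simp: indicator_def)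
  finally show ?thesis .
qed

lemma (in prob_space) integral_density_indicator_eq_of_char:
  fixes X h :: "'a \<Rightarrow> real" and D :: "real measure"
  assumes X [measurable]: "X \<in> borel_measurable M"
    and h [measurable]: "h \<in> borel_measurable M" and h_nonneg: "\<And>y. 0 \<le> h y"
    and h_int: "integrable M h" and h_1: "(\<integral>y. h y \<partial>M) = 1"
    and D: "real_distribution D"
    and char: "\<And>s. (CLINT y|M. complex_of_real (h y) * iexp (s * X y)) = char D s"
    and B [measurable]: "B \<in> sets borel"
  shows "(\<integral>y. h y * indicator B (X y) \<partial>M) = measure D B"
proof -
  define M' where "M' = density M (\<lambda>y. ennreal (h y))"
  have "emeasure M' (space M') = (\<integral>\<^sup>+y. ennreal (h y) * indicator (space M) y \<partial>M)"
    unfolding M'_def space_density by (rule emeasure_density) auto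
  also have "\<dots> = (\<integral>\<^sup>+y. ennreal (h y) \<partial>M)"
    by (rule nn_integral_cong) simp
  also have "\<dots> = 1"
    using nn_integral_eq_integral[OF h_int] h_nonneg h_1 by simp
  finally interpret M': prob_space M'
    by (rule prob_spaceI)
  have X': "X \<in> borel_measurable M'"
    by (simp add: M'_def)
  have "char (distr M' borel X) = char D"
  proof
    fix s
    have "char (distr M' borel X) s = (CLINT y|M'. iexp (s * X y))"
      unfolding char_def using X' by (simp add: integral_distr)
    also have "\<dots> = (CLINT y|M. h y *\<^sub>R iexp (s * X y))"
      unfolding M'_def by (subst integral_density) (auto simp: h_nonneg)
    also have "\<dots> = char D s"
      using char[of s] by (simp add: scaleR_conv_of_real)
    finally show "char (distr M' borel X) s = char D s" .
  qed
  then have "distr M' borel X = D"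
    using Levy_uniqueness[OF M'.real_distribution_distr[OF X'] D] by simp
  then have "measure D B = measure M' (X -` B \<inter> space M')"
    using X' by (auto simp: measure_distr)
  also have "\<dots> = (\<integral>y. indicator (X -` B \<inter> space M') y \<partial>M')"
    by simp
  also have "\<dots> = (\<integral>y. h y *\<^sub>R indicator (X -` B \<inter> space M') y \<partial>M)"
    unfolding M'_def by (subst integral_density) (auto simp: h_nonneg)
  also have "\<dots> = (\<integral>y. h y * indicator B (X y) \<partial>M)"
    by (rule Bochner_Integration.integral_cong) (auto simp: M'_def indicator_def)
  finally show ?thesis ..
qed

lemma (in prob_space) integral_weighted_indicator_eq_of_char:
  fixes X h :: "'a \<Rightarrow> real" and D :: "real measure" and c :: real
  assumes X [measurable]: "X \<in> borel_measurable M"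
    and h [measurable]: "h \<in> borel_measurable M" and h_nonneg: "\<And>y. 0 \<le> h y"
    and h_int: "integrable M h" and D: "real_distribution D"
    and char: "\<And>s. (CLINT y|M. complex_of_real (h y) * iexp (s * X y)) = c * char D s"
    and B [measurable]: "B \<in> sets borel"
  shows "(\<integral>y. h y * indicator B (X y) \<partial>M) = c * measure D B"
proof -
  have "complex_of_real (\<integral>y. h y \<partial>M) = c"
    using char[of 0] real_distribution.char_zero[OF D] by simp
  then have h_c: "(\<integral>y. h y \<partial>M) = c"
    using of_real_eq_iff by blast
  have hB_int: "integrable M (\<lambda>y. h y * indicator B (X y))"
    using h_int by (rule Bochner_Integration.integrable_bound) (auto simp: h_nonneg indicator_def)
  show ?thesis
  proof (cases "c = 0")
    case True
    have "(\<integral>y. h y * indicator B (X y) \<partial>M) \<le> (\<integral>y. h y \<partial>M)"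
      using hB_int h_int by (intro integral_mono) (auto simp: h_nonneg indicator_def)
    moreover have "0 \<le> (\<integral>y. h y * indicator B (X y) \<partial>M)"
      by (simp add: h_nonneg)
    ultimately show ?thesis
      using True h_c by simp
  next
    case False
    moreover have "0 \<le> c"
      using h_c h_nonneg by (metis Bochner_Integration.integral_nonneg)
    ultimately have "0 < c"
      by simp
    have "(\<integral>y. h y / c * indicator B (X y) \<partial>M) = measure D B"
    proof (rule integral_density_indicator_eq_of_char[OF X _ _ _ _ D _ B])
      show "(CLINT y|M. complex_of_real (h y / c) * iexp (s * X y)) = char D s" for s
        using char[of s] \<open>c \<noteq> 0\<close> by (simp add: field_simps)
    qed (use h_int h_c \<open>0 < c\<close> h_nonneg in auto)
    then show ?thesis
      using \<open>c \<noteq> 0\<close> by (simp add: field_simps)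
  qed
qed

lemma iexp_eq_cis: "iexp x = cis x"
  by (simp add: cis_conv_exp)

lemma cos_eq_cis: "complex_of_real (cos x) = (cis x + cis (- x)) / 2"
  by (simp add: complex_eq_iff)

lemma (in prob_space) integrable_cis [simp]:
  "f \<in> borel_measurable M \<Longrightarrow> integrable M (\<lambda>y. cis (f y))"
  using integrable_iexp[of "\<lambda>y. complex_of_real (f y)"] by (simp add: iexp_eq_cis)

lemma inner_axis_add_axis:
  fixes z :: "real^'n"
  shows "(axis i a + axis j b) \<bullet> z = a * z $ i + b * z $ j"
  by (simp add: inner_add_left inner_axis')

lemma quadratic_form_axis_add_axis:
  fixes S :: "real^'n^'n"
  assumes "i \<noteq> j" and "transpose S = S"
  shows "(axis i a + axis j b) \<bullet> (S *v (axis i a + axis j b))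
    = a\<^sup>2 * S $ i $ i + 2 * a * b * S $ i $ j + b\<^sup>2 * S $ j $ j"
proof -
  have "(S *v axis k c) $ l = S $ l $ k * c" for k l and c :: real
    by (simp add: matrix_vector_mult_def axis_def if_distrib cong: if_cong)
  moreover have "S $ j $ i = S $ i $ j"
    using assms(2) by (metis transpose_def vec_lambda_beta)
  ultimately show ?thesis
    by (simp add: matrix_vector_right_distrib inner_add_right inner_axis' power2_eq_square algebra_simps)
qed

locale gaussian_coord_pair =
  fixes P :: "(real^'n::finite) measure" and S :: "real^'n^'n" and i j :: 'n
  assumes gaussian: "gaussian_vec P S" and ij: "i \<noteq> j" and S_ii_pos: "0 < S $ i $ i"
begin

lemma prob_space_P: "prob_space P"
  and sets_P [measurable_cong]: "sets P = sets borel"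
  and S_sym: "transpose S = S"
  and S_psd: "0 \<le> u \<bullet> (S *v u)"
  and char_P: "(CLINT y|P. cis (u \<bullet> y)) = exp (- (u \<bullet> (S *v u)) / 2)"
  using gaussian unfolding gaussian_vec_def by auto

sublocale prob_space P
  by (rule prob_space_P)

lemma space_P: "space P = UNIV"
  using sets_eq_imp_space_eq[OF sets_P] by simp

definition "sigma_i = sqrt (S $ i $ i)"
definition "Z y = y $ i / sigma_i"
definition "beta = S $ i $ j / S $ i $ i"
definition "resid y = y $ j - beta * y $ i"
definition "resid_var = S $ j $ j - (S $ i $ j)\<^sup>2 / S $ i $ i"

lemma sigma_i_pos: "0 < sigma_i"
  using S_ii_pos by (simp add: sigma_i_def)

lemma sigma_i_sq: "sigma_i\<^sup>2 = S $ i $ i"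
  using S_ii_pos by (simp add: sigma_i_def)

lemma cov_sq_le: "(S $ i $ j)\<^sup>2 \<le> S $ i $ i * S $ j $ j"
proof -
  have "0 \<le> (axis i (S $ i $ j) + axis j (- S $ i $ i)) \<bullet> (S *v (axis i (S $ i $ j) + axis j (- S $ i $ i)))"
    by (rule S_psd)
  also have "\<dots> = S $ i $ i * (S $ i $ i * S $ j $ j - (S $ i $ j)\<^sup>2)"
    unfolding quadratic_form_axis_add_axis[OF ij S_sym] by (simp add: power2_eq_square algebra_simps)
  finally have "0 \<le> S $ i $ i * (S $ i $ i * S $ j $ j - (S $ i $ j)\<^sup>2)" .
  then show ?thesis
    using S_ii_pos by (simp add: zero_le_mult_iff)
qed

lemma resid_var_nonneg: "0 \<le> resid_var"
  using cov_sq_le S_ii_pos by (simp add: resid_var_def field_simps)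

lemma borel_measurable_Z [measurable]: "Z \<in> borel_measurable P"
  unfolding Z_def by measurable

lemma borel_measurable_resid [measurable]: "resid \<in> borel_measurable P"
  unfolding resid_def by measurable

lemma coord_j_eq: "y $ j = beta * sigma_i * Z y + resid y"
  using sigma_i_pos by (simp add: Z_def resid_def)

lemma char_Z_resid:
  "(CLINT y|P. cis (a * Z y + b * resid y)) = exp (- (a\<^sup>2 + b\<^sup>2 * resid_var) / 2)"
proof -
  define u where "u = axis i (a / sigma_i - b * beta) + axis j b"
  have "a * Z y + b * resid y = u \<bullet> y" for y
    unfolding u_def inner_axis_add_axis Z_def resid_def by (simp add: algebra_simps)
  moreover have "u \<bullet> (S *v u) = a\<^sup>2 + b\<^sup>2 * resid_var"
    unfolding u_def quadratic_form_axis_add_axis[OF ij S_sym] using sigma_i_sq sigma_i_pos S_ii_pos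
    by (simp add: resid_var_def beta_def power2_eq_square field_simps)
  ultimately show ?thesis
    using char_P[of u] by simp
qed

abbreviation "N \<equiv> std_normal_distribution"

definition "resid_law = distr N borel (\<lambda>x. sqrt resid_var * x)"

lemma real_distribution_N: "real_distribution N"
  by (rule real_dist_normal_dist)

lemma sets_N [measurable_cong]: "sets N = sets borel"
  by simp

lemma sets_resid_law [measurable_cong]: "sets resid_law = sets borel"
  by (simp add: resid_law_def)

lemma real_distribution_resid_law: "real_distribution resid_law"
proof -
  interpret N: real_distribution N
    by (rule real_distribution_N)
  show ?thesis
    unfolding resid_law_def by (rule N.real_distribution_distr) simp
qed

lemma char_resid_law: "char resid_law t = exp (- (t\<^sup>2 * resid_var) / 2)"
proof -
  have "char resid_law t = char N (t * sqrt resid_var)"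
    unfolding resid_law_def char_def by (simp add: integral_distr mult.assoc)
  also have "\<dots> = exp (- (t\<^sup>2 * resid_var) / 2)"
    using resid_var_nonneg by (simp add: char_std_normal_distribution power_mult_distrib)
  finally show ?thesis .
qed

lemma char_Z: "(CLINT y|P. cis (s * Z y)) = exp (- s\<^sup>2 / 2)"
  using char_Z_resid[of s 0] by simp

lemma char_Z_minus_resid:
  "(CLINT y|P. cis (a * Z y - b * resid y)) = exp (- (a\<^sup>2 + b\<^sup>2 * resid_var) / 2)"
  using char_Z_resid[of a "- b"] by simp

lemma integral_indicator_Z:
  assumes [measurable]: "A \<in> sets borel"
  shows "(\<integral>y. indicator A (Z y) \<partial>P) = measure N A"
  using integral_weighted_indicator_eq_of_char[OF borel_measurable_Z _ _ _ real_distribution_N,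
      of "\<lambda>_. 1" 1 A, unfolded iexp_eq_cis]
  by (simp add: char_Z char_std_normal_distribution)

lemma char_Z_weighted_cos_resid:
  "(CLINT y|P. complex_of_real (1 + cos (t * resid y + \<theta>)) * iexp (s * Z y))
    = complex_of_real (1 + exp (- (t\<^sup>2 * resid_var) / 2) * cos \<theta>) * char N s"
proof -
  have "complex_of_real (1 + cos (t * resid y + \<theta>)) * iexp (s * Z y) = cis (s * Z y)
      + (cis \<theta> * cis (s * Z y + t * resid y) + cis (- \<theta>) * cis (s * Z y + (- t) * resid y)) / 2"
    for y
    unfolding iexp_eq_cis by (simp add: cos_eq_cis cis_mult algebra_simps add_divide_distrib)
  then have "(CLINT y|P. complex_of_real (1 + cos (t * resid y + \<theta>)) * iexp (s * Z y))
      = complex_of_real (exp (- s\<^sup>2 / 2)) + (cis \<theta> * exp (- (s\<^sup>2 + t\<^sup>2 * resid_var) / 2)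
         + cis (- \<theta>) * exp (- (s\<^sup>2 + t\<^sup>2 * resid_var) / 2)) / 2"
    unfolding iexp_eq_cis by (simp add: char_Z char_Z_resid char_Z_minus_resid)
  also have "\<dots> = complex_of_real (1 + exp (- (t\<^sup>2 * resid_var) / 2) * cos \<theta>) * char N s"
  proof -
    have "exp (- (s\<^sup>2 + t\<^sup>2 * resid_var) / 2) = exp (- s\<^sup>2 / 2) * exp (- (t\<^sup>2 * resid_var) / 2)"
      by (simp add: exp_add[symmetric] field_simps)
    then show ?thesis
      by (simp add: cos_eq_cis char_std_normal_distribution field_simps)
  qed
  finally show ?thesis .
qed

text \<open>Levy uniqueness applied to the weight \<open>1 + cos (t * resid + \<theta>)\<close>: the law of \<open>Z\<close>
  stays standard normal, which identifies \<open>E [1\<^sub>A(Z) cos (t * resid + \<theta>)]\<close> and hence the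
  characteristic function of \<open>resid\<close> on \<open>{Z \<in> A}\<close>.\<close>
lemma integral_indicator_Z_cos_resid:
  assumes [measurable]: "A \<in> sets borel"
  shows "(\<integral>y. indicator A (Z y) * cos (t * resid y + \<theta>) \<partial>P)
    = exp (- (t\<^sup>2 * resid_var) / 2) * cos \<theta> * measure N A"
proof -
  have "(\<integral>y. (1 + cos (t * resid y + \<theta>)) * indicator A (Z y) \<partial>P)
      = (1 + exp (- (t\<^sup>2 * resid_var) / 2) * cos \<theta>) * measure N A"
  proof (rule integral_weighted_indicator_eq_of_char[OF borel_measurable_Z _ _ _ real_distribution_N])
    show "0 \<le> 1 + cos (t * resid y + \<theta>)" for y
      using cos_ge_minus_one[of "t * resid y + \<theta>"] by linarith
    show "integrable P (\<lambda>y. 1 + cos (t * resid y + \<theta>))"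
      by (intro Bochner_Integration.integrable_add integrable_const integrable_const_bound[of _ 1]) auto
    show "(CLINT y|P. complex_of_real (1 + cos (t * resid y + \<theta>)) * iexp (s * Z y))
        = complex_of_real (1 + exp (- (t\<^sup>2 * resid_var) / 2) * cos \<theta>) * char N s" for s
      by (rule char_Z_weighted_cos_resid)
  qed auto
  moreover have "(\<integral>y. (1 + cos (t * resid y + \<theta>)) * indicator A (Z y) \<partial>P)
      = (\<integral>y. indicator A (Z y) \<partial>P) + (\<integral>y. indicator A (Z y) * cos (t * resid y + \<theta>) \<partial>P)"
  proof -
    have "integrable P (\<lambda>y. indicator A (Z y) :: real)"
      and "integrable P (\<lambda>y. indicator A (Z y) * cos (t * resid y + \<theta>))"
      by (intro integrable_const_bound[of _ 1]; simp add: indicator_def)+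
    from Bochner_Integration.integral_add[OF this] show ?thesis
      by (simp add: distrib_left distrib_right mult.commute)
  qed
  ultimately show ?thesis
    unfolding integral_indicator_Z[OF assms] by (simp add: algebra_simps)
qed

lemma integral_indicator_Z_cis_resid:
  assumes [measurable]: "A \<in> sets borel"
  shows "(CLINT y|P. complex_of_real (indicator A (Z y)) * cis (t * resid y))
    = exp (- (t\<^sup>2 * resid_var) / 2) * measure N A"
proof -
  define f where "f \<theta> y = indicator A (Z y) * cos (t * resid y + \<theta>)" for \<theta> y
  have f_int: "integrable P (f \<theta>)" for \<theta>
    unfolding f_def by (intro integrable_const_bound[of _ 1]) (auto simp: indicator_def)
  have "complex_of_real (indicator A (Z y)) * cis (t * resid y)
      = complex_of_real (f 0 y) + \<i> * complex_of_real (f (- (pi / 2)) y)" for y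
    by (simp add: f_def complex_eq_iff cos_diff)
  then have "(CLINT y|P. complex_of_real (indicator A (Z y)) * cis (t * resid y))
      = complex_of_real (\<integral>y. f 0 y \<partial>P) + \<i> * complex_of_real (\<integral>y. f (- (pi / 2)) y \<partial>P)"
    using f_int by simp
  also have "\<dots> = exp (- (t\<^sup>2 * resid_var) / 2) * measure N A"
    unfolding f_def integral_indicator_Z_cos_resid[OF assms] by simp
  finally show ?thesis .
qed

lemma nn_integral_N: "f \<in> borel_measurable borel \<Longrightarrow> (\<integral>\<^sup>+x. f x \<partial>N) = (\<integral>\<^sup>+x. ennreal (\<phi> x) * f x \<partial>lborel)"
  by (simp add: nn_integral_density)

lemma integral_indicator_Z_indicator_resid:
  assumes [measurable]: "A \<in> sets borel" "B \<in> sets borel"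
  shows "(\<integral>y. indicator A (Z y) * indicator B (resid y) \<partial>P) = measure N A * measure resid_law B"
proof (rule integral_weighted_indicator_eq_of_char[OF borel_measurable_resid _ _ _
      real_distribution_resid_law])
  show "(CLINT y|P. complex_of_real (indicator A (Z y)) * iexp (s * resid y))
      = complex_of_real (measure N A) * char resid_law s" for s
    unfolding iexp_eq_cis
    by (simp add: integral_indicator_Z_cis_resid char_resid_law mult.commute)
  show "integrable P (\<lambda>y. indicator A (Z y) :: real)"
    by (intro integrable_const_bound[of _ 1]) auto
qed auto

lemma distr_Z_resid: "distr P (borel \<Otimes>\<^sub>M borel) (\<lambda>y. (Z y, resid y)) = N \<Otimes>\<^sub>M resid_law"
proof (rule pair_measure_eqI[symmetric])
  interpret N: real_distribution N
    by (rule real_distribution_N)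
  interpret resid_law: real_distribution resid_law
    by (rule real_distribution_resid_law)
  show "sigma_finite_measure N" and "sigma_finite_measure resid_law"
    by unfold_locales
  show "sets (N \<Otimes>\<^sub>M resid_law) = sets (distr P (borel \<Otimes>\<^sub>M borel) (\<lambda>y. (Z y, resid y)))"
    by (simp add: sets_pair_measure_cong[OF sets_N sets_resid_law])
  fix A B
  assume "A \<in> sets N" and "B \<in> sets resid_law"
  then have [measurable]: "A \<in> sets borel" "B \<in> sets borel"
    by auto
  have "emeasure (distr P (borel \<Otimes>\<^sub>M borel) (\<lambda>y. (Z y, resid y))) (A \<times> B)
      = measure P ((\<lambda>y. (Z y, resid y)) -` (A \<times> B) \<inter> space P)"
    by (simp add: emeasure_distr emeasure_eq_measure)
  also have "measure P ((\<lambda>y. (Z y, resid y)) -` (A \<times> B) \<inter> space P)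
      = (\<integral>y. indicator ((\<lambda>y. (Z y, resid y)) -` (A \<times> B) \<inter> space P) y \<partial>P)"
    by simp
  also have "\<dots> = (\<integral>y. indicator A (Z y) * indicator B (resid y) \<partial>P)"
    by (rule Bochner_Integration.integral_cong) (auto simp: indicator_def space_P)
  finally show "emeasure N A * emeasure resid_law B
      = emeasure (distr P (borel \<Otimes>\<^sub>M borel) (\<lambda>y. (Z y, resid y))) (A \<times> B)"
    by (simp add: integral_indicator_Z_indicator_resid N.emeasure_eq_measure
        resid_law.emeasure_eq_measure ennreal_mult)
qed

lemma nn_integral_Z_resid:
  assumes [measurable]: "F \<in> borel_measurable (borel \<Otimes>\<^sub>M borel)"
  shows "(\<integral>\<^sup>+y. F (Z y, resid y) \<partial>P)
    = (\<integral>\<^sup>+x. ennreal (\<phi> x) * (\<integral>\<^sup>+t. ennreal (\<phi> t) * F (x, sqrt resid_var * t) \<partial>lborel) \<partial>lborel)"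
proof -
  interpret resid_law: real_distribution resid_law
    by (rule real_distribution_resid_law)
  have "(\<integral>\<^sup>+y. F (Z y, resid y) \<partial>P) = (\<integral>\<^sup>+z. F z \<partial>(N \<Otimes>\<^sub>M resid_law))"
    by (simp add: distr_Z_resid[symmetric] nn_integral_distr)
  also have "\<dots> = (\<integral>\<^sup>+x. (\<integral>\<^sup>+w. F (x, w) \<partial>resid_law) \<partial>N)"
    by (subst resid_law.nn_integral_fst[symmetric])
      (auto simp: measurable_cong_sets[OF sets_pair_measure_cong[OF sets_N sets_resid_law] refl])
  also have "\<dots> = (\<integral>\<^sup>+x. (\<integral>\<^sup>+t. F (x, sqrt resid_var * t) \<partial>N) \<partial>N)"
    by (rule nn_integral_cong) (simp add: resid_law_def nn_integral_distr)
  also have "\<dots> = (\<integral>\<^sup>+x. ennreal (\<phi> x) * (\<integral>\<^sup>+t. ennreal (\<phi> t) * F (x, sqrt resid_var * t) \<partial>lborel) \<partial>lborel)"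
    by (simp add: nn_integral_N)
  finally show ?thesis .
qed


lemma measure_coord_i_U_set:
  assumes a: "0 < a"
  shows "measure P {y. y $ i \<in> U_set a} = 1 - erf (a / (sqrt 2 * sigma_i))"
proof -
  have [measurable]: "U_set a \<in> sets borel"
    unfolding U_set_def by measurable
  define A where "A = {x. sigma_i * x \<in> U_set a}"
  have [measurable]: "A \<in> sets borel"
    unfolding A_def by measurable
  have "{y. y $ i \<in> U_set a} \<in> sets P"
    by measurable
  then have "measure P {y. y $ i \<in> U_set a} = (\<integral>y. indicator {y. y $ i \<in> U_set a} y \<partial>P)"
    by simp
  also have "\<dots> = (\<integral>y. indicator A (Z y) \<partial>P)"
    using sigma_i_pos by (auto simp: A_def Z_def indicator_def intro!: Bochner_Integration.integral_cong)
  also have "\<dots> = enn2real (emeasure N A)"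
    by (simp add: integral_indicator_Z measure_def)
  also have "emeasure N A = (\<integral>\<^sup>+x. ennreal (\<phi> x) * indicator (U_set a) (sigma_i * x) \<partial>lborel)"
    unfolding A_def by (subst emeasure_density) (auto simp: indicator_def intro!: nn_integral_cong)
  also have "\<dots> = 2 * ennreal ((1 - erf (a / sigma_i / sqrt 2)) / 2)"
    by (simp add: nn_integral_U_set_even[OF sigma_i_pos a] std_normal_density_minus
        nn_integral_std_normal_tail)
  finally show ?thesis
    using erf_le_1[of "a / sigma_i / sqrt 2"] by (simp add: enn2real_mult field_simps)
qed

definition "slope = beta * sigma_i"
definition "resid_sd = sqrt resid_var"

lemma nn_integral_abs_coord_j_U_set:
  assumes a: "0 < a"
  shows "(\<integral>\<^sup>+y. ennreal (\<bar>y $ j\<bar> * indicator {y. y $ i \<in> U_set a} y) \<partial>P)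
    = 2 * (\<integral>\<^sup>+x. ennreal (\<phi> x * folded_normal_mean (slope * x) resid_sd) * indicator {a / sigma_i..} x \<partial>lborel)"
proof -
  have [measurable]: "U_set a \<in> sets borel"
    unfolding U_set_def by measurable
  define F where "F = (\<lambda>(x, w). ennreal (\<bar>slope * x + w\<bar> * indicator (U_set a) (sigma_i * x)))"
  have [measurable]: "F \<in> borel_measurable (borel \<Otimes>\<^sub>M borel)"
    unfolding F_def by measurable
  have "(\<integral>\<^sup>+y. ennreal (\<bar>y $ j\<bar> * indicator {y. y $ i \<in> U_set a} y) \<partial>P) = (\<integral>\<^sup>+y. F (Z y, resid y) \<partial>P)"
    using sigma_i_pos
    by (intro nn_integral_cong) (simp add: F_def coord_j_eq slope_def Z_def indicator_def)
  also have "\<dots> = (\<integral>\<^sup>+x. ennreal (\<phi> x * folded_normal_mean (slope * x) resid_sd)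
      * indicator (U_set a) (sigma_i * x) \<partial>lborel)"
  proof -
    have "ennreal (\<phi> t) * F (x, sqrt resid_var * t)
        = indicator (U_set a) (sigma_i * x) * ennreal (\<phi> t * \<bar>slope * x + resid_sd * t\<bar>)" for x t
      by (simp add: F_def resid_sd_def indicator_def ennreal_mult'[symmetric])
    then have "(\<integral>\<^sup>+t. ennreal (\<phi> t) * F (x, sqrt resid_var * t) \<partial>lborel)
        = indicator (U_set a) (sigma_i * x) * ennreal (folded_normal_mean (slope * x) resid_sd)" for x
      using nn_integral_std_normal_abs_affine[of resid_sd "slope * x"] resid_var_nonneg
      by (simp add: nn_integral_cmult resid_sd_def)
    then show ?thesis
      using folded_normal_mean_nonneg[of resid_sd] resid_var_nonneg
      by (simp add: nn_integral_Z_resid resid_sd_def ennreal_mult' mult_ac)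
  qed
  also have "\<dots> = 2 * (\<integral>\<^sup>+x. ennreal (\<phi> x * folded_normal_mean (slope * x) resid_sd) * indicator {a / sigma_i..} x \<partial>lborel)"
    by (rule nn_integral_U_set_even[OF sigma_i_pos a])
      (simp_all add: std_normal_density_minus folded_normal_mean_minus)
  finally show ?thesis .
qed

lemma integral_abs_coord_j_U_set:
  assumes a: "0 < a"
  defines "s \<equiv> sqrt (slope\<^sup>2 + resid_sd\<^sup>2)" and "z \<equiv> a / sigma_i"
  shows "(\<integral>y. \<bar>y $ j\<bar> * indicator {y. y $ i \<in> U_set a} y \<partial>P)
    = 2 * (s / sqrt (2 * pi) * (1 - erf_div (s * z) (resid_sd * sqrt 2))
           + slope * \<phi> z * erf_div (slope * z) (resid_sd * sqrt 2))"
proof -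
  have "0 \<le> resid_sd" "0 \<le> z"
    using resid_var_nonneg sigma_i_pos a by (simp_all add: resid_sd_def z_def)
  note tail = nn_integral_std_normal_folded_mean_tail[OF this, of slope, folded s_def]
  have "{y. y $ i \<in> U_set a} \<in> sets P"
    unfolding U_set_def by measurable
  then show ?thesis
    using nn_integral_abs_coord_j_U_set[OF a] tail
    by (subst integral_eq_nn_integral) (auto simp: z_def enn2real_mult)
qed

definition "sigma_j = sqrt (S $ j $ j)"
definition "corr = S $ i $ j / (sigma_i * sigma_j)"

lemma slope_eq_corr: "0 < S $ j $ j \<Longrightarrow> slope = corr * sigma_j"
  using sigma_i_pos sigma_i_sq[symmetric]
  by (simp add: slope_def beta_def corr_def sigma_j_def field_simps power2_eq_square)

lemma corr_sq_le_1: "0 < S $ j $ j \<Longrightarrow> corr\<^sup>2 \<le> 1"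
  using cov_sq_le S_ii_pos
  by (simp add: corr_def sigma_i_def sigma_j_def power_divide power_mult_distrib)

lemma resid_sd_eq_corr:
  assumes "0 < S $ j $ j"
  shows "resid_sd = sigma_j * sqrt (1 - corr\<^sup>2)"
proof -
  have "resid_var = sigma_j\<^sup>2 * (1 - corr\<^sup>2)"
    using assms sigma_i_pos sigma_i_sq[symmetric]
    by (simp add: resid_var_def corr_def sigma_j_def field_simps power2_eq_square)
  then show ?thesis
    using assms by (simp add: resid_sd_def sigma_j_def real_sqrt_mult)
qed

lemma cond_abs_mean_eq_closed_form:
  assumes a: "0 < a" and S_jj_pos: "0 < S $ j $ j"
  shows "cond_abs_mean P i j a = closed_form S i j a"
proof -
  define rho' where "rho' = sqrt (1 - corr\<^sup>2)"
  define ds where "ds = a / (sqrt 2 * sigma_i)"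
  define E1 where "E1 = erf_div ds rho'"
  define E2 where "E2 = erf_div (corr * ds) rho'"
  have sigma_j_pos: "0 < sigma_j"
    using S_jj_pos by (simp add: sigma_j_def)
  have "0 \<le> 1 - corr\<^sup>2"
    using corr_sq_le_1[OF S_jj_pos] by simp
  then have "slope\<^sup>2 + resid_sd\<^sup>2 = sigma_j\<^sup>2"
    by (simp add: slope_eq_corr[OF S_jj_pos] resid_sd_eq_corr[OF S_jj_pos] power_mult_distrib
        algebra_simps)
  then have norm_eq: "sqrt (slope\<^sup>2 + resid_sd\<^sup>2) = sigma_j"
    using sigma_j_pos by simp
  have scale: "sigma_j * (a / sigma_i) = (sigma_j * sqrt 2) * ds"
    "slope * (a / sigma_i) = (sigma_j * sqrt 2) * (corr * ds)"
    "resid_sd * sqrt 2 = (sigma_j * sqrt 2) * rho'"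
    using sigma_i_pos
    by (simp_all add: ds_def rho'_def slope_eq_corr[OF S_jj_pos] resid_sd_eq_corr[OF S_jj_pos])
  have "0 < sigma_j * sqrt 2"
    using sigma_j_pos by simp
  note erf_div_eq = erf_div_scale[OF this]
  have phi_eq: "\<phi> (a / sigma_i) = exp (- ds\<^sup>2) / sqrt (2 * pi)"
    by (simp add: std_normal_density_eq ds_def power_divide field_simps)
  have sqrt_eq: "sqrt (2 / pi) = 2 / sqrt (2 * pi)"
    by (simp add: real_sqrt_divide real_sqrt_mult field_simps)
  have "(\<integral>y. \<bar>y $ j\<bar> * indicator {y. y $ i \<in> U_set a} y \<partial>P)
      = sqrt (2 / pi) * sigma_j * (1 - E1 + corr * E2 * exp (- ds\<^sup>2))"
    unfolding integral_abs_coord_j_U_set[OF a] norm_eq scale erf_div_eq phi_eq sqrt_eq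
    by (simp add: E1_def E2_def slope_eq_corr[OF S_jj_pos] field_simps)
  moreover have "measure P {y. y $ i \<in> U_set a} = 1 - erf ds"
    unfolding ds_def by (rule measure_coord_i_U_set[OF a])
  moreover have "closed_form S i j a
      = sqrt (2 / pi) * (sigma_j / (1 - erf ds)) * (1 - E1 + corr * E2 * exp (- ds\<^sup>2))"
    unfolding closed_form_def Let_def sigma_i_def[symmetric] sigma_j_def[symmetric] corr_def[symmetric]
      rho'_def[symmetric] ds_def[symmetric] E1_def[symmetric] E2_def[symmetric] ..
  ultimately show ?thesis
    by (simp add: cond_abs_mean_def mult_ac)
qed

end

lemma centering_entry: "(centering :: real^'n^'n) $ k $ l = (if k = l then 1 else 0) - 1 / real CARD('n)"
  by (simp add: centering_def mat_def)

lemma transpose_centering: "transpose (centering :: real^'n^'n) = centering"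
  by (simp add: vec_eq_iff transpose_def centering_entry)

lemma centering_row_sum: "(\<Sum>l\<in>UNIV. (centering :: real^'n^'n) $ k $ l) = 0"
  by (simp add: centering_entry sum_subtractf)

lemma diag_mat_conj_diag_entry:
  fixes R :: "real^'n^'n"
  shows "(R ** diag_mat d ** transpose R) $ k $ k = (\<Sum>l\<in>UNIV. d l * (R $ k $ l)\<^sup>2)"
proof -
  have "(R ** diag_mat d) $ k $ l = R $ k $ l * d l" for l
    by (simp add: matrix_matrix_mult_def diag_mat_def if_distrib cong: if_cong)
  then show ?thesis
    by (simp add: matrix_matrix_mult_def[of "R ** diag_mat d"] transpose_def power2_eq_square mult_ac)
qed

lemma centering_mult_orthogonal_row_nonzero:
  fixes Q :: "real^'n^'n"
  assumes n: "CARD('n) \<ge> 2" and Q: "orthogonal_matrix Q"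
    and Q_col: "column k1 Q = (1 / sqrt (real CARD('n))) *\<^sub>R (\<chi> a. 1)"
  shows "\<exists>l. l \<noteq> k1 \<and> (centering ** Q) $ k $ l \<noteq> 0"
proof (rule ccontr)
  assume "\<not> ?thesis"
  moreover have "(centering ** Q) $ k $ k1 = 0"
  proof -
    have "Q $ l $ k1 = 1 / sqrt (real CARD('n))" for l
      using arg_cong[OF Q_col, of "\<lambda>v. v $ l"] by (simp add: column_def)
    then show ?thesis
      by (simp add: matrix_matrix_mult_def sum_divide_distrib[symmetric] centering_row_sum)
  qed
  ultimately have zero: "(centering ** Q) $ k $ l = 0" for l
    by (cases "l = k1") auto
  have "(centering :: real^'n^'n) = (centering ** Q) ** transpose Q"
    using Q by (simp add: matrix_mul_assoc[symmetric] orthogonal_matrix_def)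
  then have "(centering :: real^'n^'n) $ k $ k = ((centering ** Q) ** transpose Q) $ k $ k"
    by simp
  also have "\<dots> = 0"
    by (simp add: matrix_matrix_mult_def[of "centering ** Q"] zero)
  finally have "(centering :: real^'n^'n) $ k $ k = 0" .
  moreover have "1 / real CARD('n) < 1"
    using n by simp
  ultimately show False
    by (simp add: centering_entry)
qed

lemma psi_pos:
  assumes "0 < l" and "0 \<le> tau" and "l * tau < pi / 2"
  shows "0 < psi tau l"
proof -
  have "0 \<le> l * tau"
    using assms by simp
  have "0 < cos (l * tau)"
    by (rule cos_gt_zero_pi) (use \<open>0 \<le> l * tau\<close> assms(3) pi_gt_zero in linarith)+
  moreover have "sin (l * tau) < 1"
  proof -
    have "(cos (l * tau))\<^sup>2 = 1 - (sin (l * tau))\<^sup>2"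
      by (rule cos_squared_eq)
    then have "sin (l * tau) \<noteq> 1"
      using \<open>0 < cos (l * tau)\<close> by auto
    then show ?thesis
      using sin_le_one[of "l * tau"] by linarith
  qed
  ultimately show ?thesis
    unfolding psi_def using assms(1) by simp
qed

lemma nominal_covariance_diag_pos:
  fixes Q :: "real^'n^'n" and lam :: "'n \<Rightarrow> real"
  assumes n: "CARD('n) \<ge> 2" and b: "b \<noteq> 0" and tau: "0 \<le> tau"
    and Q: "orthogonal_matrix Q"
    and Q_col: "column k1 Q = (1 / sqrt (real CARD('n))) *\<^sub>R (\<chi> a. 1)"
    and lam_pos: "\<forall>k. k \<noteq> k1 \<longrightarrow> 0 < lam k"
    and stable: "tau < pi / (2 * Max (range lam))"
  shows "0 < ((b\<^sup>2) *\<^sub>R (centering ** Q **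
    diag_mat (\<lambda>k. if k = k1 then 0 else psi tau (lam k)) ** transpose Q ** centering)) $ k $ k"
proof -
  define d where "d = (\<lambda>k. if k = k1 then 0 else psi tau (lam k))"
  have d_pos: "0 < d l" if "l \<noteq> k1" for l
  proof -
    have max: "lam l \<le> Max (range lam)" and pos: "0 < lam l"
      using lam_pos that by auto
    then have "lam l * tau \<le> Max (range lam) * tau"
      using tau by (intro mult_right_mono)
    also have "\<dots> < pi / 2"
      using stable max pos by (simp add: field_simps)
    finally show ?thesis
      using psi_pos[OF pos tau] that by (simp add: d_def)
  qed
  then have d_nonneg: "0 \<le> d l" for l
    by (cases "l = k1") (auto simp: d_def less_imp_le)
  obtain l where l: "l \<noteq> k1" "(centering ** Q) $ k $ l \<noteq> 0"
    using centering_mult_orthogonal_row_nonzero[OF n Q Q_col] by blast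
  have "0 < d l * ((centering ** Q) $ k $ l)\<^sup>2"
    using d_pos[OF l(1)] l(2) by simp
  also have "\<dots> \<le> (\<Sum>l\<in>UNIV. d l * ((centering ** Q) $ k $ l)\<^sup>2)"
    by (rule member_le_sum) (auto intro!: mult_nonneg_nonneg d_nonneg)
  also have "\<dots> = (centering ** Q ** diag_mat d ** transpose Q ** centering) $ k $ k"
    using diag_mat_conj_diag_entry[of "centering ** Q" d k]
    by (simp add: matrix_transpose_mul transpose_centering matrix_mul_assoc)
  finally show ?thesis
    using b by (simp add: d_def)
qed

lemma loewner_le_diag:
  fixes A B :: "real^'n^'n"
  assumes "loewner_le A B"
  shows "A $ k $ k \<le> B $ k $ k"
proof -
  have quad: "axis k 1 \<bullet> (M *v axis k 1) = M $ k $ k" for M :: "real^'n^'n"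
    by (simp add: inner_axis' matrix_vector_mult_basis column_def)
  show ?thesis
    using assms unfolding loewner_le_def by (metis quad)
qed

lemma Inf_nonneg_margin:
  fixes s c :: real
  shows "Inf {\<delta>. 0 \<le> \<delta> \<and> s \<le> \<delta> + c} = (if s \<le> c then 0 else s - c)"
proof -
  have "{\<delta>. 0 \<le> \<delta> \<and> s \<le> \<delta> + c} = {max 0 (s - c)..}"
    by auto
  then show ?thesis
    by simp
qed

theorem theorem1:
  fixes w :: "'n::finite \<Rightarrow> 'n \<Rightarrow> real"
    and b0 tau0 :: real
    and Q :: "real^'n^'n" and lam :: "'n \<Rightarrow> real" and k1 :: 'n
    and Sigma0 :: "real^'n^'n"
    and i j :: 'n
    and c d eps_minus eps_plus :: real
    and Mset :: "(real^'n) measure set"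
  assumes n2: "CARD('n) \<ge> 2"
    and graph: "weighted_simple_graph w" and conn: "graph_connected w"
    and b0: "b0 \<noteq> 0" and tau0: "0 \<le> tau0"
    and Qorth: "orthogonal_matrix Q"
    and Qcol1: "column k1 Q = (1 / sqrt (real CARD('n))) *\<^sub>R (\<chi> a. 1)"
    and lam1: "lam k1 = 0" and lampos: "\<forall>k. k \<noteq> k1 \<longrightarrow> 0 < lam k"
    and eig: "laplacian w = Q ** diag_mat lam ** transpose Q"
    and stab: "tau0 < pi / (2 * Max (range lam))"
    and Sigma0_def: "Sigma0 = (b0^2) *\<^sub>R (centering ** Q **
          diag_mat (\<lambda>k. if k = k1 then 0 else psi tau0 (lam k)) ** transpose Q ** centering)"
    and ij: "i \<noteq> j"
    and c: "0 < c" and d: "0 < d"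
    and em: "0 \<le> eps_minus" "eps_minus < 1" and ep: "0 \<le> eps_plus"
    and Mset_def: "Mset = {P. \<exists>S. gaussian_vec P S \<and>
          loewner_le ((1 - eps_minus) *\<^sub>R Sigma0) S \<and> loewner_le S ((1 + eps_plus) *\<^sub>R Sigma0)}"
  shows "(\<forall>P S. gaussian_vec P S \<and> loewner_le ((1 - eps_minus) *\<^sub>R Sigma0) S
              \<and> loewner_le S ((1 + eps_plus) *\<^sub>R Sigma0)
            \<longrightarrow> cond_abs_mean P i j (d + c) = closed_form S i j (d + c))
      \<and> (let Ssup = Sup ((\<lambda>P. cond_abs_mean P i j (d + c)) ` Mset)
         in Inf {delta. 0 \<le> delta \<and> Ssup \<le> delta + c} = (if Ssup \<le> c then 0 else Ssup - c))"
proof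
  have Sigma0_diag_pos: "0 < Sigma0 $ k $ k" for k
    unfolding Sigma0_def by (rule nominal_covariance_diag_pos[OF n2 b0 tau0 Qorth Qcol1 lampos stab])
  show "\<forall>P S. gaussian_vec P S \<and> loewner_le ((1 - eps_minus) *\<^sub>R Sigma0) S
      \<and> loewner_le S ((1 + eps_plus) *\<^sub>R Sigma0)
    \<longrightarrow> cond_abs_mean P i j (d + c) = closed_form S i j (d + c)"
  proof (intro allI impI)
    fix P S
    assume PS: "gaussian_vec P S \<and> loewner_le ((1 - eps_minus) *\<^sub>R Sigma0) S
      \<and> loewner_le S ((1 + eps_plus) *\<^sub>R Sigma0)"
    have S_diag_pos: "0 < S $ k $ k" for k
    proof -
      have "0 < (1 - eps_minus) * Sigma0 $ k $ k"
        using em Sigma0_diag_pos[of k] by simp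
      also have "\<dots> \<le> S $ k $ k"
        using loewner_le_diag[of "(1 - eps_minus) *\<^sub>R Sigma0" S k] PS by simp
      finally show ?thesis .
    qed
    interpret gaussian_coord_pair P S i j
      using PS ij S_diag_pos by unfold_locales auto
    show "cond_abs_mean P i j (d + c) = closed_form S i j (d + c)"
      using c d S_diag_pos by (intro cond_abs_mean_eq_closed_form) auto
  qed
  show "let Ssup = Sup ((\<lambda>P. cond_abs_mean P i j (d + c)) ` Mset)
    in Inf {delta. 0 \<le> delta \<and> Ssup \<le> delta + c} = (if Ssup \<le> c then 0 else Ssup - c)"
    unfolding Let_def by (rule Inf_nonneg_margin)
qed

end
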